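(* Let $H \subset L$ be light-cone regular. Then its initial boundary satisfies $H_0 = \{ h \in H \mid h + v_N \notin H \}$.
   Context: Let $L$ be a finitely generated $\mathbb{Z}$-module and $v_1,\dots,v_N\in L$ distinct elements, linearly independent over $\mathbb{Z}_{\ge 0}$ (i.e. $\sum_i a_i v_i=0$ with all $a_i\in\mathbb{Z}_{\ge0}$ forces all $a_i=0$). Let $S=\{\sum_i a_iv_i : a_i\in\mathbb{Z}_{\ge0}\}$ and define the partial order $h_1\le h_2$ iff $h_1-h_2\in S$. Assume $v_N$ is the minimum of $\{0,v_1,\dots,v_N\}$ with respect to $\le$ (this is part of the standing invertibility assumption on the equation $f_h=\Phi(f_{h+v_1},\dots,f_{h+v_N})$). A nonempty subset $H\subset L$ is light-cone regular if for every $h\in H$ the set $\{h'\in H: h'\le h\}$ is finite and $\{h'\in L: h'\ge h\}\subset H$. Its initial boundary is $H_0=\{h\in H:\ h+v_i\notin H\text{ for some }i\}$. *)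

theory Defs
  imports Main
begin

text \<open>The Z-module L is modelled as an abelian group (type class ab_group_add);
  natural and integer multiples are defined explicitly.\<close>

primrec nsmul :: "nat \<Rightarrow> 'a::monoid_add \<Rightarrow> 'a" where
  "nsmul 0 x = 0"
| "nsmul (Suc n) x = x + nsmul n x"

definition zsmul :: "int \<Rightarrow> 'a::ab_group_add \<Rightarrow> 'a" where
  "zsmul k x = (if 0 \<le> k then nsmul (nat k) x else - nsmul (nat (- k)) x)"

definition fin_gen_Z_module :: "'a::ab_group_add itself \<Rightarrow> bool" where
  "fin_gen_Z_module _ \<longleftrightarrow>
     (\<exists>G::'a set. finite G \<and> (\<forall>x::'a. \<exists>c::'a \<Rightarrow> int. x = (\<Sum>g\<in>G. zsmul (c g) g)))"

definition nonneg_lin_indep :: "(nat \<Rightarrow> 'a::ab_group_add) \<Rightarrow> nat \<Rightarrow> bool" where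
  "nonneg_lin_indep v N \<longleftrightarrow>
     (\<forall>a::nat \<Rightarrow> nat. (\<Sum>i\<in>{1..N}. nsmul (a i) (v i)) = 0 \<longrightarrow> (\<forall>i\<in>{1..N}. a i = 0))"

definition semigrp :: "(nat \<Rightarrow> 'a::ab_group_add) \<Rightarrow> nat \<Rightarrow> 'a set" where
  "semigrp v N = {x. \<exists>a::nat \<Rightarrow> nat. x = (\<Sum>i\<in>{1..N}. nsmul (a i) (v i))}"

definition lc_le :: "(nat \<Rightarrow> 'a::ab_group_add) \<Rightarrow> nat \<Rightarrow> 'a \<Rightarrow> 'a \<Rightarrow> bool" where
  "lc_le v N h1 h2 \<longleftrightarrow> h1 - h2 \<in> semigrp v N"

definition light_cone_regular :: "(nat \<Rightarrow> 'a::ab_group_add) \<Rightarrow> nat \<Rightarrow> 'a set \<Rightarrow> bool" where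
  "light_cone_regular v N H \<longleftrightarrow> H \<noteq> {} \<and>
     (\<forall>h\<in>H. finite {h'\<in>H. lc_le v N h' h} \<and> {h'. lc_le v N h h'} \<subseteq> H)"

definition initial_boundary :: "(nat \<Rightarrow> 'a::ab_group_add) \<Rightarrow> nat \<Rightarrow> 'a set \<Rightarrow> 'a set" where
  "initial_boundary v N H = {h\<in>H. \<exists>i\<in>{1..N}. h + v i \<notin> H}"

end

theory Submission
  imports Defs
begin

text \<open>Only the minimality of \<open>v N\<close> and the upward closure of \<open>H\<close> matter: if \<open>h + v N \<in> H\<close>,
  then every \<open>h + v i \<ge> h + v N\<close> lies in \<open>H\<close> as well, so \<open>h\<close> can leave \<open>H\<close> in some direction
  \<open>v i\<close> only if it leaves it in direction \<open>v N\<close>.\<close>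

lemma lc_le_add_left_cancel [simp]: "lc_le v N (h + a) (h + b) \<longleftrightarrow> lc_le v N a b"
  unfolding lc_le_def by simp

lemma light_cone_regular_upward_closed:
  assumes "light_cone_regular v N H" and "h \<in> H" and "lc_le v N h h'"
  shows "h' \<in> H"
  using assms unfolding light_cone_regular_def by blast

lemma initial_boundary_eq_if_minimal:
  assumes "light_cone_regular v N H"
    and "n \<in> {1..N}"
    and minimal: "\<forall>i\<in>{1..N}. lc_le v N (v n) (v i)"
  shows "initial_boundary v N H = {h\<in>H. h + v n \<notin> H}"
proof
  show "{h\<in>H. h + v n \<notin> H} \<subseteq> initial_boundary v N H"
    using \<open>n \<in> {1..N}\<close> unfolding initial_boundary_def by blast
  show "initial_boundary v N H \<subseteq> {h\<in>H. h + v n \<notin> H}"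
  proof
    fix h assume "h \<in> initial_boundary v N H"
    then obtain i where "h \<in> H" "i \<in> {1..N}" "h + v i \<notin> H"
      unfolding initial_boundary_def by blast
    moreover have "h + v i \<in> H" if "h + v n \<in> H"
      using light_cone_regular_upward_closed[OF assms(1) that] minimal \<open>i \<in> {1..N}\<close> by simp
    ultimately show "h \<in> {h\<in>H. h + v n \<notin> H}" by blast
  qed
qed

theorem lemma3p1:
  fixes v :: "nat \<Rightarrow> 'a::ab_group_add" and N :: nat and H :: "'a set"
  assumes "fin_gen_Z_module TYPE('a)"
    and "1 \<le> N"
    and "inj_on v {1..N}"
    and "nonneg_lin_indep v N"
    and "\<forall>x\<in>insert 0 (v ` {1..N}). lc_le v N (v N) x"
    and "light_cone_regular v N H"
  shows "initial_boundary v N H = {h\<in>H. h + v N \<notin> H}"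
proof (rule initial_boundary_eq_if_minimal)
  show "light_cone_regular v N H" by fact
  show "N \<in> {1..N}" using \<open>1 \<le> N\<close> by simp
  show "\<forall>i\<in>{1..N}. lc_le v N (v N) (v i)" using assms(5) by simp
qed

end
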